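(* Let $L$ be a positive integer and $U>0$ with $L>\frac{8}{U}$, and let $N=3$. Consider the Lieb-Wu equations with one down spin in the unknowns $k_1,k_2,k_3$ and real $\Lambda$: $$e^{i k_j L} = \frac{\Lambda - \sin k_j - iU/4}{\Lambda - \sin k_j + iU/4},\quad j=1,2,3,\qquad \prod_{j=1}^3 \frac{\Lambda - \sin k_j - iU/4}{\Lambda - \sin k_j + iU/4} = 1.$$ Consider solutions consisting of one $k$-$\Lambda$ two-string and a single real $k$, i.e. $k_1 = q - i\xi$, $k_2 = q+i\xi$ with $q$ real (taken modulo $2\pi$, $q\in[0,2\pi)$), $\xi>0$, and $k_3$ real. Such solutions exist only if $\frac{\pi}{2}<q<\frac{3\pi}{2}$. For every choice of branch of the real momentum $k_3$ (i.e. for every $\ell\in\{1,\dots,L\}$ with $k_3 = q_\ell(\Lambda)$), there exist $L-1$ $k$-$\Lambda$ two-strings if $L$ is odd and $L-2$ $k$-$\Lambda$ two-strings if $L$ is even. This gives a total number of $L(L-1)$ solutions of this type for $L$ odd and $L(L-2)$ for $L$ even.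
   Context: For $L>8/U$ and each real $\Lambda$, the equation $\sin k - \Lambda = \frac{U}{4}\cot\left(\frac{kL}{2}\right)$ has exactly one real solution $k = q_\ell(\Lambda)$ in each interval $[(\ell-1)\frac{2\pi}{L},\ell\frac{2\pi}{L}]$, $\ell=1,\dots,L$; the functions $q_\ell$ are the branches of the real momentum. Real momenta satisfying the first Lieb-Wu equation are exactly the solutions of this equation. The $k_j$ are determined modulo $2\pi$. *)

theory Defs
  imports Complex_Main
begin

definition lw_theta :: "real \<Rightarrow> real \<Rightarrow> complex \<Rightarrow> complex" where
  "lw_theta U \<Lambda> k =
     (complex_of_real \<Lambda> - sin k - \<i> * complex_of_real (U/4)) /
     (complex_of_real \<Lambda> - sin k + \<i> * complex_of_real (U/4))"

definition lieb_wu3 :: "nat \<Rightarrow> real \<Rightarrow> complex \<Rightarrow> complex \<Rightarrow> complex \<Rightarrow> real \<Rightarrow> bool" where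
  "lieb_wu3 L U k1 k2 k3 \<Lambda> \<longleftrightarrow>
     (\<forall>k\<in>{k1, k2, k3}. exp (\<i> * k * of_nat L) = lw_theta U \<Lambda> k) \<and>
     lw_theta U \<Lambda> k1 * lw_theta U \<Lambda> k2 * lw_theta U \<Lambda> k3 = 1"

text \<open>Branch l of the real momentum: the unique solution k in the l-th interval of
  sin k - Lambda = U/4 cot(kL/2). (The open interval is used since the equation has no
  solution at the endpoints, where cot is infinite.)\<close>
definition real_momentum :: "nat \<Rightarrow> real \<Rightarrow> nat \<Rightarrow> real \<Rightarrow> real" where
  "real_momentum L U l \<Lambda> =
     (THE k. (real l - 1) * (2 * pi / real L) < k \<and> k < real l * (2 * pi / real L) \<and>
             sin k - \<Lambda> = U / 4 * cot (k * real L / 2))"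

definition string_solutions :: "nat \<Rightarrow> real \<Rightarrow> (real \<times> real \<times> real \<times> real) set" where
  "string_solutions L U =
     {(q, \<xi>, k3, \<Lambda>). 0 \<le> q \<and> q < 2 * pi \<and> 0 < \<xi> \<and> 0 \<le> k3 \<and> k3 < 2 * pi \<and>
        lieb_wu3 L U (Complex q (- \<xi>)) (Complex q \<xi>) (complex_of_real k3) \<Lambda>}"

end

theory Submission
  imports Defs "HOL-Analysis.Analysis" "HOL-Computational_Algebra.Fundamental_Theorem_Algebra"
begin

text \<open>With \<open>w = e^(ik)\<close>, each Lieb--Wu equation says that \<open>w\<close> is a root of a monic
  polynomial \<open>P\<^sub>\<Lambda>\<close> of degree \<open>L + 2\<close> whose roots are symmetric under \<open>w \<mapsto> 1/w\<^sup>*\<close>.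
  For \<open>UL > 8\<close> its roots on the unit circle are exactly the \<open>L\<close> simple roots
  \<open>e^(iq\<^sub>l(\<Lambda>))\<close>, so the two remaining roots are \<open>z\<close> and \<open>1/z\<^sup>*\<close> with \<open>|z| > 1\<close>, and a
  two-string must be \<open>e^(ik\<^sub>1) = z\<close>, \<open>e^(ik\<^sub>2) = 1/z\<^sup>*\<close>. Since \<open>P\<^sub>\<Lambda>(0) = 1\<close>, the product of
  all roots is \<open>(-1)\<^sup>L\<close>, which turns the product equation on branch \<open>l\<close> into the condition
  that \<open>L/(2\<pi>) \<Sum>\<^sub>m\<^sub>\<noteq>\<^sub>l q\<^sub>m(\<Lambda>) - L/2\<close> be an integer. As \<open>\<Lambda>\<close> runs over the reals this
  function increases continuously between two numbers at distance \<open>L - 1\<close>, which are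
  half-integers for odd \<open>L\<close> and integers for even \<open>L\<close>; so it takes \<open>L - 1\<close>, respectively
  \<open>L - 2\<close>, integer values.\<close>

lemma cis_inj_on_0_2pi: "inj_on cis {0..<2 * pi}"
proof (rule inj_onI)
  fix a b assume "a \<in> {0..<2 * pi}" "b \<in> {0..<2 * pi}" "cis a = cis b"
  then show "a = b"
    using Arg2pi_unique[of 1 a "cis a"] Arg2pi_unique[of 1 b "cis a"] by (auto simp: cis_conv_exp)
qed

lemma unimodular_eq_cis_Arg2pi: "cmod w = 1 \<Longrightarrow> w = cis (Arg2pi w)"
  by (simp add: complex_norm_eq_1_exp cis_conv_exp)

lemma cis_eq_1_iff_Ints: "cis x = 1 \<longleftrightarrow> x / (2 * pi) \<in> \<int>"
proof -
  have "cis x = 1 \<longleftrightarrow> sin x = sin 0 \<and> cos x = cos 0"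
    by (auto simp: complex_eq_iff)
  also have "\<dots> \<longleftrightarrow> (\<exists>n::int. x = 0 + 2 * pi * of_int n)"
    by (rule sin_cos_eq_iff)
  also have "\<dots> \<longleftrightarrow> x / (2 * pi) \<in> \<int>"
    by (auto simp: field_simps elim!: Ints_cases)
  finally show ?thesis .
qed

lemma cis_double_minus_1: "cis (2 * t) - 1 = 2 * \<i> * of_real (sin t) * cis t"
  by (simp add: complex_eq_iff cos_double_sin sin_double power2_eq_square)

lemma cis_double_plus_1: "cis (2 * t) + 1 = 2 * of_real (cos t) * cis t"
  by (simp add: complex_eq_iff cos_double_cos sin_double power2_eq_square)

lemma cis_double_minus_1_sq: "(cis (2 * t) - 1)\<^sup>2 = -4 * of_real ((sin t)\<^sup>2) * cis (2 * t)"
  by (simp add: cis_double_minus_1 power_mult_distrib Complex.DeMoivre)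

text \<open>The hypothesis \<open>v \<noteq> 0\<close> rules out the junk value \<open>(x - iu)/0 = 0\<close>.\<close>

lemma eq_moebius_iff:
  fixes x v :: complex and u :: real
  assumes "u \<noteq> 0" "v \<noteq> 0"
  shows "v = (x - \<i> * of_real u) / (x + \<i> * of_real u) \<longleftrightarrow>
    x * (v - 1) + \<i> * of_real u * (v + 1) = 0"
proof (cases "x + \<i> * of_real u = 0")
  case True
  then have "x * (v - 1) + \<i> * of_real u * (v + 1) = 2 * \<i> * of_real u"
    by (simp add: eq_neg_iff_add_eq_0[symmetric] algebra_simps)
  then show ?thesis using True assms by simp
next
  case False
  then have "v = (x - \<i> * of_real u) / (x + \<i> * of_real u) \<longleftrightarrow>
      v * (x + \<i> * of_real u) = x - \<i> * of_real u"
    by (simp add: field_simps)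
  also have "\<dots> \<longleftrightarrow> x * (v - 1) + \<i> * of_real u * (v + 1) = 0"
    by (auto simp: algebra_simps)
  finally show ?thesis .
qed

lemma prod_linear_factors_dvd:
  fixes p :: "'a::idom poly"
  assumes "finite S" and "\<And>z. z \<in> S \<Longrightarrow> poly p z = 0"
  shows "(\<Prod>z\<in>S. [:-z, 1:]) dvd p"
  using assms
proof (induction S arbitrary: p rule: finite_induct)
  case empty
  then show ?case by simp
next
  case (insert a S)
  obtain q where q: "p = [:-a, 1:] * q"
    using insert.prems poly_eq_0_iff_dvd by blast
  have "(\<Prod>z\<in>S. [:-z, 1:]) dvd q"
    using insert by (intro insert.IH) (auto simp: q)
  then have "[:-a, 1:] * (\<Prod>z\<in>S. [:-z, 1:]) dvd p"
    unfolding q by (rule mult_dvd_mono[OF dvd_refl])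
  then show ?case
    unfolding prod.insert[OF insert.hyps] .
qed

lemma poly_linear_factors_eq_0_iff:
  fixes S :: "'a::idom set"
  assumes "finite S"
  shows "poly ((\<Prod>x\<in>S. [:-x, 1:]) * ([:-a, 1:] * [:-b, 1:])) y = 0 \<longleftrightarrow> y \<in> S \<or> y = a \<or> y = b"
  using assms by (simp only: poly_mult poly_prod) (auto simp: prod_zero_iff)

lemma poly_pderiv_at_double_root:
  fixes p :: "'a::idom poly"
  assumes "[:-a, 1:] ^ 2 dvd p"
  shows "poly (pderiv p) a = 0"
proof -
  from assms obtain h where "p = [:-a, 1:] ^ 2 * h" by (rule dvdE)
  then have p: "p = [:-a, 1:] * ([:-a, 1:] * h)" by (simp only: power2_eq_square mult.assoc)
  show ?thesis unfolding p pderiv_mult poly_add poly_mult by simp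
qed

lemma card_Ints_preimage_strict_mono:
  fixes f :: "real \<Rightarrow> real"
  assumes mono: "strict_mono f" and cont: "\<And>x. isCont f x"
    and bot: "(f \<longlongrightarrow> a) at_bot" and top: "(f \<longlongrightarrow> b) at_top"
  shows "finite {x. f x \<in> \<int>} \<and> card {x. f x \<in> \<int>} = card {n::int. a < of_int n \<and> of_int n < b}"
proof -
  let ?E = "{x. f x \<in> \<int>}" and ?N = "{n::int. a < of_int n \<and> of_int n < b}"
  have a_le: "a \<le> f y" and le_b: "f y \<le> b" for y
    by (rule tendsto_upperbound[OF bot] tendsto_lowerbound[OF top],
        use strict_mono_less_eq[OF mono] in \<open>auto simp: eventually_at_bot_linorder eventually_at_top_linorder\<close>)+
  have bounds: "a < f x" "f x < b" for x
    using a_le[of "x - 1"] le_b[of "x + 1"] strict_mono_less[OF mono, of "x - 1" x]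
      strict_mono_less[OF mono, of x "x + 1"] by auto
  have image: "f ` ?E = of_int ` ?N"
  proof
    show "f ` ?E \<subseteq> of_int ` ?N"
    proof
      fix y assume "y \<in> f ` ?E"
      then obtain x n where "y = f x" "f x = of_int n" by (auto elim!: Ints_cases)
      then show "y \<in> of_int ` ?N" using bounds[of x] by (auto simp: image_iff)
    qed
    show "of_int ` ?N \<subseteq> f ` ?E"
    proof
      fix y :: real assume "y \<in> of_int ` ?N"
      then have y: "y \<in> \<int>" "a < y" "y < b" by auto
      obtain x1 where x1: "f x1 < y"
        using order_tendstoD(2)[OF bot y(2)] by (auto simp: eventually_at_bot_linorder)
      obtain x2 where x2: "y < f x2"
        using order_tendstoD(1)[OF top y(3)] by (auto simp: eventually_at_top_linorder)
      have "x1 \<le> x2"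
        using x1 x2 strict_mono_less_eq[OF mono, of x2 x1] by linarith
      then obtain x where "f x = y"
        using IVT[of f x1 y x2] x1 x2 cont by auto
      then show "y \<in> f ` ?E" using y by auto
    qed
  qed
  have "finite ?N"
    by (rule finite_subset[of _ "{floor a .. ceiling b}"])
      (auto simp: floor_le_iff le_ceiling_iff intro: less_imp_le)
  moreover have "inj_on f ?E"
    using mono by (rule strict_mono_imp_inj_on)
  ultimately show ?thesis
    using image finite_imageD[of f ?E] card_image[of f ?E] card_image[of "of_int :: int \<Rightarrow> real" ?N]
    by (simp add: inj_on_def)
qed

lemma card_int_open_interval:
  fixes A :: int and L :: nat
  assumes "1 \<le> L"
  shows "card {n::int. of_int A - real L / 2 < of_int n \<and> of_int n < of_int A + real L / 2 - 1}
    = (if odd L then L - 1 else L - 2)"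
proof -
  have "of_int A - real L / 2 < of_int n \<longleftrightarrow> 2 * A - int L < 2 * n"
    and "of_int n < of_int A + real L / 2 - 1 \<longleftrightarrow> 2 * n < 2 * A + int L - 2" for n :: int
    by (simp_all only: of_int_less_iff[symmetric, where 'a = real]) (auto simp: field_simps)
  then have eq: "{n::int. of_int A - real L / 2 < of_int n \<and> of_int n < of_int A + real L / 2 - 1}
      = {n. 2 * A - int L < 2 * n \<and> 2 * n < 2 * A + int L - 2}"
    by blast
  show ?thesis
  proof (cases "odd L")
    case True
    then obtain j where j: "L = 2 * j + 1" using oddE by blast
    have "{n. 2 * A - int L < 2 * n \<and> 2 * n < 2 * A + int L - 2} = {A - int j .. A + int j - 1}"
      unfolding j by (auto; presburger)
    then show ?thesis using True j eq by simp
  next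
    case False
    then obtain j where j: "L = 2 * j" using evenE by blast
    have "{n. 2 * A - int L < 2 * n \<and> 2 * n < 2 * A + int L - 2} = {A - int j + 1 .. A + int j - 2}"
      unfolding j by (auto; presburger)
    then show ?thesis using False j assms eq by (simp add: nat_diff_distrib)
  qed
qed

section \<open>The Lieb--Wu polynomial\<close>

text \<open>For \<open>w = e^(ik)\<close> and \<open>u = U/4\<close>, the Lieb--Wu equation \<open>e^(ikL) = \<theta>(k)\<close> cleared of
  denominators reads \<open>(w\<^sup>2 - 1)(w\<^sup>L - 1) + 2uw(w\<^sup>L + 1) - 2i\<Lambda>w(w\<^sup>L - 1) = 0\<close>.\<close>

definition lw_poly :: "nat \<Rightarrow> real \<Rightarrow> real \<Rightarrow> complex poly" where
  "lw_poly L u \<Lambda> = monom 1 (L + 2) - monom 1 2 - monom 1 L + 1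
     + monom (2 * of_real u) (L + 1) + monom (2 * of_real u) 1
     - monom (2 * \<i> * of_real \<Lambda>) (L + 1) + monom (2 * \<i> * of_real \<Lambda>) 1"

lemma poly_lw_poly:
  "poly (lw_poly L u \<Lambda>) w = (w\<^sup>2 - 1) * (w ^ L - 1) + 2 * of_real u * w * (w ^ L + 1)
     - 2 * \<i> * of_real \<Lambda> * w * (w ^ L - 1)"
  by (simp add: lw_poly_def poly_monom algebra_simps power2_eq_square)

lemma poly_lw_poly_0: "0 < L \<Longrightarrow> poly (lw_poly L u \<Lambda>) 0 = 1"
  by (simp add: poly_lw_poly)

lemma
  assumes "0 < L"
  shows degree_lw_poly: "degree (lw_poly L u \<Lambda>) = L + 2"
    and lead_coeff_lw_poly: "lead_coeff (lw_poly L u \<Lambda>) = 1"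
proof -
  have top: "coeff (lw_poly L u \<Lambda>) (L + 2) = 1"
    unfolding lw_poly_def using assms by simp
  have "degree (lw_poly L u \<Lambda>) \<le> L + 2"
    unfolding lw_poly_def by (rule degree_le) auto
  moreover have "L + 2 \<le> degree (lw_poly L u \<Lambda>)"
    by (rule le_degree) (metis top one_neq_zero)
  ultimately show deg: "degree (lw_poly L u \<Lambda>) = L + 2" by simp
  show "lead_coeff (lw_poly L u \<Lambda>) = 1"
    using deg top by simp
qed

lemma poly_lw_poly_exp:
  "poly (lw_poly L u \<Lambda>) (exp (\<i> * k)) = -2 * \<i> * exp (\<i> * k) *
     ((of_real \<Lambda> - sin k) * (exp (\<i> * k) ^ L - 1) + \<i> * of_real u * (exp (\<i> * k) ^ L + 1))"
proof -
  define w where "w = exp (\<i> * k)"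
  have w0: "w \<noteq> 0" unfolding w_def by simp
  have s: "sin k = (w - inverse w) / (2 * \<i>)"
    unfolding sin_exp_eq w_def by (simp add: exp_minus)
  show ?thesis
    unfolding w_def[symmetric] s poly_lw_poly using w0 by (simp add: field_simps power2_eq_square)
qed

lemma lw_equation_iff_root:
  assumes "U \<noteq> 0"
  shows "exp (\<i> * k * of_nat L) = lw_theta U \<Lambda> k \<longleftrightarrow> poly (lw_poly L (U / 4) \<Lambda>) (exp (\<i> * k)) = 0"
proof -
  have e: "exp (\<i> * k * of_nat L) = exp (\<i> * k) ^ L"
    by (metis exp_of_nat_mult mult.commute)
  have "exp (\<i> * k * of_nat L) = lw_theta U \<Lambda> k \<longleftrightarrow>
      (of_real \<Lambda> - sin k) * (exp (\<i> * k) ^ L - 1) + \<i> * of_real (U / 4) * (exp (\<i> * k) ^ L + 1) = 0"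
    unfolding lw_theta_def e by (rule eq_moebius_iff) (use assms in auto)
  also have "\<dots> \<longleftrightarrow> poly (lw_poly L (U / 4) \<Lambda>) (exp (\<i> * k)) = 0"
    unfolding poly_lw_poly_exp by simp
  finally show ?thesis .
qed

lemma poly_lw_poly_cis:
  assumes "sin (k * real L / 2) \<noteq> 0"
  shows "poly (lw_poly L u \<Lambda>) (cis k) = -2 * \<i> * cis k * (cis (k * real L) - 1) *
    of_real (\<Lambda> - sin k + u * cot (k * real L / 2))"
proof -
  define t where "t = k * real L / 2"
  have kL: "k * real L = 2 * t" by (simp add: t_def)
  have pow: "cis k ^ L = cis (2 * t)"
    unfolding Complex.DeMoivre kL[symmetric] by (simp add: mult.commute)
  have cot: "\<i> * (cis (2 * t) + 1) = (cis (2 * t) - 1) * of_real (cot t)"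
    using assms unfolding t_def[symmetric] cis_double_plus_1 cis_double_minus_1
    by (simp add: cot_def field_simps)
  have "poly (lw_poly L u \<Lambda>) (cis k) = -2 * \<i> * cis k *
      ((of_real \<Lambda> - sin (of_real k)) * (cis (2 * t) - 1) + of_real u * (\<i> * (cis (2 * t) + 1)))"
    using poly_lw_poly_exp[of L u \<Lambda> "of_real k"] by (simp add: cis_conv_exp[symmetric] pow mult.assoc)
  also have "\<dots> = -2 * \<i> * cis k * (cis (2 * t) - 1) * of_real (\<Lambda> - sin k + u * cot t)"
    unfolding cot by (simp add: sin_of_real algebra_simps)
  finally show ?thesis by (simp add: kL)
qed

lemma poly_lw_poly_reflect:
  fixes y :: complex
  assumes "y \<noteq> 0"
  shows "poly (lw_poly L u \<Lambda>) (inverse (cnj y)) * cnj y ^ L * (cnj y)\<^sup>2 = cnj (poly (lw_poly L u \<Lambda>) y)"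
proof -
  define c where "c = cnj y"
  have c0: "c \<noteq> 0" using assms by (simp add: c_def)
  have "poly (lw_poly L u \<Lambda>) (inverse c) * c ^ L * c\<^sup>2 = (c\<^sup>2 - 1) * (c ^ L - 1)
      + 2 * of_real u * c * (c ^ L + 1) + 2 * \<i> * of_real \<Lambda> * c * (c ^ L - 1)"
    unfolding poly_lw_poly power_inverse using c0 by (simp add: field_simps power2_eq_square)
  also have "\<dots> = cnj (poly (lw_poly L u \<Lambda>) y)"
    by (simp add: poly_lw_poly c_def)
  finally show ?thesis unfolding c_def .
qed

lemma lw_poly_root_reflect:
  assumes "poly (lw_poly L u \<Lambda>) y = 0" "y \<noteq> 0"
  shows "poly (lw_poly L u \<Lambda>) (inverse (cnj y)) = 0"
  using poly_lw_poly_reflect[OF assms(2), of L u \<Lambda>] assms by simp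

text \<open>At a root \<open>w\<close> the right-hand side reduces to \<open>(w\<^sup>L - 1)\<^sup>2(w\<^sup>2 + 1) - 4uLw\<^sup>L w\<close>,
  which therefore decides whether the root is simple.\<close>

lemma lw_poly_pderiv_identity:
  assumes "0 < L"
  shows "(w ^ L - 1) * (w * poly (pderiv (lw_poly L u \<Lambda>)) w) =
    (w ^ L - 1)\<^sup>2 * (w\<^sup>2 + 1) - 4 * of_real u * of_nat L * w ^ L * w
    + (w ^ L - 1 + of_nat L * w ^ L) * poly (lw_poly L u \<Lambda>) w"
proof -
  have pderiv: "pderiv (lw_poly L u \<Lambda>) = monom (of_nat (L + 2)) (L + 1) - monom 2 1
      - monom (of_nat L) (L - 1) + monom (2 * of_real u * of_nat (L + 1)) L + monom (2 * of_real u) 0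
      - monom (2 * \<i> * of_real \<Lambda> * of_nat (L + 1)) L + monom (2 * \<i> * of_real \<Lambda>) 0"
    unfolding lw_poly_def by (simp add: pderiv_add pderiv_diff pderiv_monom mult.commute)
  have e1: "w * w ^ (L - 1) = w ^ L" using assms by (cases L) auto
  have e2: "w * w ^ (L + 1) = w\<^sup>2 * w ^ L" by (simp add: power2_eq_square)
  have w_pderiv: "w * poly (pderiv (lw_poly L u \<Lambda>)) w =
      (of_nat L + 2) * w\<^sup>2 * w ^ L - 2 * w\<^sup>2 - of_nat L * w ^ L
      + 2 * of_real u * (of_nat L + 1) * w * w ^ L + 2 * of_real u * w
      - 2 * \<i> * of_real \<Lambda> * (of_nat L + 1) * w * w ^ L + 2 * \<i> * of_real \<Lambda> * w"
    unfolding pderiv poly_add poly_diff poly_monom distrib_left right_diff_distrib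
    by (simp only: e1 e2 mult.left_commute[of w] power_one_right power_0 mult_1_right)
      (simp add: algebra_simps power2_eq_square)
  have identity: "(y - 1) * ((n + 2) * w\<^sup>2 * y - 2 * w\<^sup>2 - n * y + 2 * c * (n + 1) * w * y + 2 * c * w
      - 2 * \<i> * d * (n + 1) * w * y + 2 * \<i> * d * w)
    = (y - 1)\<^sup>2 * (w\<^sup>2 + 1) - 4 * c * n * y * w
      + (y - 1 + n * y) * ((w\<^sup>2 - 1) * (y - 1) + 2 * c * w * (y + 1) - 2 * \<i> * d * w * (y - 1))"
    for y c d n :: complex
    by algebra
  show ?thesis
    unfolding w_pderiv poly_lw_poly by (rule identity)
qed

section \<open>Solutions containing a two-string\<close>

lemma exp_two_string_momenta:
  "exp (\<i> * Complex q (- \<xi>)) = of_real (exp \<xi>) * cis q"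
  "exp (\<i> * Complex q \<xi>) = of_real (exp (- \<xi>)) * cis q"
  by (subst exp_eq_polar, simp add: exp_of_real)+

lemma string_solutions_iff:
  assumes "U \<noteq> 0"
  shows "(q, \<xi>, k3, \<Lambda>) \<in> string_solutions L U \<longleftrightarrow>
    0 \<le> q \<and> q < 2 * pi \<and> 0 < \<xi> \<and> 0 \<le> k3 \<and> k3 < 2 * pi \<and>
    poly (lw_poly L (U / 4) \<Lambda>) (of_real (exp \<xi>) * cis q) = 0 \<and>
    poly (lw_poly L (U / 4) \<Lambda>) (of_real (exp (- \<xi>)) * cis q) = 0 \<and>
    poly (lw_poly L (U / 4) \<Lambda>) (cis k3) = 0 \<and> cis ((2 * q + k3) * real L) = 1"
proof -
  let ?k1 = "Complex q (- \<xi>)" and ?k2 = "Complex q \<xi>" and ?k3 = "complex_of_real k3"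
  have "\<i> * ?k1 * of_nat L + \<i> * ?k2 * of_nat L + \<i> * ?k3 * of_nat L
      = \<i> * of_real ((2 * q + k3) * real L)"
    by (simp add: complex_eq_iff algebra_simps)
  then have "exp (\<i> * ?k1 * of_nat L) * exp (\<i> * ?k2 * of_nat L) * exp (\<i> * ?k3 * of_nat L)
      = cis ((2 * q + k3) * real L)"
    unfolding mult_exp_exp cis_conv_exp by simp
  moreover have "exp (\<i> * ?k3) = cis k3"
    by (simp add: cis_conv_exp)
  ultimately show ?thesis
    unfolding string_solutions_def lieb_wu3_def
    using lw_equation_iff_root[OF assms, of ?k1 L \<Lambda>] lw_equation_iff_root[OF assms, of ?k2 L \<Lambda>]
      lw_equation_iff_root[OF assms, of ?k3 L \<Lambda>]
    by (auto simp: exp_two_string_momenta)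
qed

text \<open>\<open>|e^(ik\<^sub>1L)| = e^(\<xi>L) > 1\<close> forces \<open>Im (\<Lambda> - sin k\<^sub>1) = cos q sinh \<xi> < 0\<close>.\<close>

lemma string_solutions_q_range:
  assumes "0 < L" "0 < U" "(q, \<xi>, k3, \<Lambda>) \<in> string_solutions L U"
  shows "pi / 2 < q \<and> q < 3 * pi / 2"
proof -
  let ?k = "Complex q (- \<xi>)"
  from assms(3) have q: "0 \<le> q" "q < 2 * pi" and "0 < \<xi>"
    and eq: "exp (\<i> * ?k * of_nat L) = lw_theta U \<Lambda> ?k"
    unfolding string_solutions_def lieb_wu3_def by auto
  define x where "x = of_real \<Lambda> - sin ?k"
  define u where "u = U / 4"
  have "1 < exp (\<xi> * real L)" using \<open>0 < \<xi>\<close> assms(1) by simp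
  also have "exp (\<xi> * real L) = cmod ((x - \<i> * of_real u) / (x + \<i> * of_real u))"
    using arg_cong[OF eq, of cmod] by (simp add: norm_exp_eq_Re lw_theta_def x_def u_def)
  finally have "cmod (x + \<i> * of_real u) < cmod (x - \<i> * of_real u)"
    by (cases "x + \<i> * of_real u = 0") (simp_all add: norm_divide divide_simps)
  then have "(cmod (x + \<i> * of_real u))\<^sup>2 < (cmod (x - \<i> * of_real u))\<^sup>2"
    by (simp add: power_strict_mono)
  then have "(Re x)\<^sup>2 + (Im x + u)\<^sup>2 < (Re x)\<^sup>2 + (Im x - u)\<^sup>2"
    by (simp add: cmod_power2)
  then have "u * Im x < 0"
    by (simp add: power2_eq_square algebra_simps)
  moreover have "Im x = cos q * (exp \<xi> - exp (- \<xi>)) / 2"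
    unfolding x_def by (simp add: Im_sin field_simps)
  moreover have "0 < u" "0 < exp \<xi> - exp (- \<xi>)" using assms(2) \<open>0 < \<xi>\<close> by (simp_all add: u_def)
  ultimately have "cos q < 0" by (simp add: mult_less_0_iff)
  moreover have "0 \<le> cos q" if "q \<le> pi / 2"
    using that q by (intro cos_ge_zero) auto
  moreover have "0 \<le> cos (q - 2 * pi)" if "3 * pi / 2 \<le> q"
    using that q by (intro cos_ge_zero) auto
  ultimately show ?thesis by (force simp: cos_diff)
qed

section \<open>Branches of the real momentum\<close>

locale lieb_wu_regime =
  fixes L :: nat and U :: real
  assumes L_pos: "0 < L" and U_pos: "0 < U" and UL_gt_8: "8 < U * real L"
begin

abbreviation lwp :: "real \<Rightarrow> complex poly" where
  "lwp \<Lambda> \<equiv> lw_poly L (U / 4) \<Lambda>"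

definition lambda_of :: "real \<Rightarrow> real" where
  "lambda_of k = sin k - U / 4 * cot (k * real L / 2)"

definition branch :: "nat \<Rightarrow> real set" where
  "branch l = {(real l - 1) * (2 * pi / real L) <..< real l * (2 * pi / real L)}"

lemma U_neq_0: "U \<noteq> 0"
  using U_pos by simp

lemma branch_width_pos: "0 < 2 * pi / real L"
  using L_pos by simp

lemma branch_left_lt_right: "(real l - 1) * (2 * pi / real L) < real l * (2 * pi / real L)"
  using branch_width_pos by (intro mult_strict_right_mono) auto

lemma mem_branch_iff_half_angle:
  "k \<in> branch l \<longleftrightarrow> (real l - 1) * pi < k * real L / 2 \<and> k * real L / 2 < real l * pi"
  using L_pos by (auto simp: branch_def field_simps)

lemma branch_disjoint:
  assumes "k \<in> branch l" "k \<in> branch m"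
  shows "l = m"
proof -
  from assms have "(real l - 1) * pi < real m * pi" "(real m - 1) * pi < real l * pi"
    unfolding mem_branch_iff_half_angle by linarith+
  then have "real l - 1 < real m" "real m - 1 < real l"
    by (simp_all only: mult_less_cancel_right_pos[OF pi_gt_zero])
  then show ?thesis by linarith
qed

lemma sin_half_angle_nonzero: "k \<in> branch l \<Longrightarrow> sin (k * real L / 2) \<noteq> 0"
proof
  assume "k \<in> branch l" and "sin (k * real L / 2) = 0"
  then obtain i :: int where "k * real L / 2 = of_int i * pi"
    and "(real l - 1) * pi < of_int i * pi" "of_int i * pi < real l * pi"
    by (auto simp: mem_branch_iff_half_angle sin_zero_iff_int2)
  then have "int l - 1 < i" "i < int l" by simp_all
  then show False by linarith
qed

lemma branch_of_angle:
  assumes "0 \<le> k" "k < 2 * pi" "sin (k * real L / 2) \<noteq> 0"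
  shows "\<exists>l\<in>{1..L}. k \<in> branch l"
proof -
  define x where "x = k * real L / (2 * pi)"
  define n where "n = \<lfloor>x\<rfloor>"
  have "0 \<le> x" "x < real L"
    using assms L_pos by (simp_all add: x_def field_simps)
  then have n: "0 \<le> n" "n < int L" unfolding n_def by linarith+
  have "of_int n \<noteq> x"
  proof
    assume "of_int n = x"
    then have "k * real L / 2 = of_int n * pi" by (simp add: x_def field_simps)
    then show False using assms(3) by (simp add: sin_zero_iff_int2)
  qed
  then have "of_int n < x" "x < of_int n + 1" unfolding n_def by linarith+
  moreover have "k * real L / 2 = x * pi" by (simp add: x_def)
  ultimately have "of_int n * pi < k * real L / 2" "k * real L / 2 < (of_int n + 1) * pi"
    by (simp_all add: mult_strict_right_mono)
  moreover have l: "real (nat n + 1) = of_int n + 1"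
    using n by simp
  ultimately have "k \<in> branch (nat n + 1)"
    unfolding mem_branch_iff_half_angle l by simp
  moreover have "nat n + 1 \<in> {1..L}" using n by auto
  ultimately show ?thesis by blast
qed

text \<open>The hypothesis \<open>UL > 8\<close> makes the derivative of \<open>lambda_of\<close> positive even where \<open>cos k = -1\<close>.\<close>

lemma lambda_of_has_positive_derivative:
  assumes "sin (k * real L / 2) \<noteq> 0"
  shows "\<exists>D>0. (lambda_of has_real_derivative D) (at k)"
proof -
  let ?s = "(sin (k * real L / 2))\<^sup>2"
  have half: "((\<lambda>k. k * real L / 2) has_real_derivative (real L / 2)) (at k)"
    by (auto intro!: derivative_eq_intros)
  have cot: "((\<lambda>k. cot (k * real L / 2)) has_real_derivative (- inverse ?s * (real L / 2))) (at k)"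
    by (rule DERIV_chain2[OF DERIV_cot[OF assms] half])
  have deriv: "(lambda_of has_real_derivative (cos k + U / 4 * (real L / 2) / ?s)) (at k)"
    unfolding lambda_of_def using DERIV_diff[OF DERIV_sin DERIV_cmult[OF cot, of "U / 4"]]
    by (simp add: field_simps)
  have "U / 4 * (real L / 2) \<le> U / 4 * (real L / 2) / ?s"
    using assms U_pos L_pos abs_square_le_1[of "sin (k * real L / 2)"] by (simp add: divide_simps)
  moreover have "1 < U / 4 * (real L / 2)" using UL_gt_8 by simp
  moreover have "-1 \<le> cos k" by simp
  ultimately have "0 < cos k + U / 4 * (real L / 2) / ?s" by linarith
  with deriv show ?thesis by blast
qed

lemma lambda_of_strict_mono_on: "strict_mono_on (branch l) lambda_of"
proof (rule strict_mono_onI)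
  fix a b assume ab: "a \<in> branch l" "b \<in> branch l" "a < b"
  show "lambda_of a < lambda_of b"
  proof (rule DERIV_pos_imp_increasing[OF ab(3)])
    fix x assume "a \<le> x" "x \<le> b"
    then have "x \<in> branch l" using ab by (auto simp: branch_def)
    then show "\<exists>D. (lambda_of has_real_derivative D) (at x) \<and> 0 < D"
      using lambda_of_has_positive_derivative sin_half_angle_nonzero by blast
  qed
qed

lemma lambda_of_inj_on: "inj_on lambda_of (branch l)"
  using lambda_of_strict_mono_on by (rule strict_mono_on_imp_inj_on)

lemma lambda_of_isCont: "k \<in> branch l \<Longrightarrow> isCont lambda_of k"
  using lambda_of_has_positive_derivative sin_half_angle_nonzero DERIV_isCont by blast

lemma cot_add_multiple_pi: "cot (x + real n * pi) = cot x"
proof -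
  have "sin (x + real n * pi) = (-1) ^ n * sin x" "cos (x + real n * pi) = (-1) ^ n * cos x"
    by (simp_all add: sin_add cos_add)
  then show ?thesis by (simp add: cot_def)
qed

text \<open>The points \<open>a < b\<close> are taken so close to the ends of the branch that the cotangent term
  equals \<open>\<mp>(|\<Lambda>| + 2)\<close> there, which outweighs \<open>sin\<close>; then the intermediate value theorem applies.\<close>

lemma lambda_of_surj_on_branch:
  assumes "l \<in> {1..L}"
  shows "\<exists>k \<in> branch l. lambda_of k = \<Lambda>"
proof -
  define t where "t = arctan (U / 4 / (\<bar>\<Lambda>\<bar> + 2))"
  have t: "0 < t" "t < pi / 2"
    unfolding t_def using U_pos arctan_ubound by (auto simp: zero_less_arctan_iff)
  have cot_t: "cot t = (\<bar>\<Lambda>\<bar> + 2) / (U / 4)"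
    unfolding t_def cot_altdef tan_arctan using U_pos by simp
  define a where "a = (real l - 1) * (2 * pi / real L) + 2 * t / real L"
  define b where "b = real l * (2 * pi / real L) - 2 * t / real L"
  have a_half: "a * real L / 2 = t + real (l - 1) * pi"
    unfolding a_def using L_pos assms by (simp add: field_simps of_nat_diff)
  have b_half: "b * real L / 2 = - t + real l * pi"
    unfolding b_def using L_pos by (simp add: field_simps)
  have "lambda_of a = sin a - (\<bar>\<Lambda>\<bar> + 2)"
    unfolding lambda_of_def a_half cot_add_multiple_pi cot_t using U_pos by (simp add: field_simps)
  then have "lambda_of a \<le> \<Lambda>" using sin_le_one[of a] by linarith
  have "lambda_of b = sin b + (\<bar>\<Lambda>\<bar> + 2)"
    unfolding lambda_of_def b_half cot_add_multiple_pi cot_minus cot_t using U_pos by (simp add: field_simps)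
  then have "\<Lambda> \<le> lambda_of b" using sin_ge_minus_one[of b] by linarith
  have "2 * t / real L < pi / real L" using t L_pos by (simp add: divide_strict_right_mono)
  then have ab: "a < b" "a \<in> branch l" "b \<in> branch l"
    using t L_pos unfolding a_def b_def branch_def by (auto simp: field_simps)
  then have "\<forall>x. a \<le> x \<and> x \<le> b \<longrightarrow> isCont lambda_of x"
    by (intro allI impI lambda_of_isCont[of _ l]) (auto simp: branch_def)
  then obtain k where "a \<le> k" "k \<le> b" "lambda_of k = \<Lambda>"
    using IVT[of lambda_of a \<Lambda> b] ab \<open>lambda_of a \<le> \<Lambda>\<close> \<open>\<Lambda> \<le> lambda_of b\<close> by auto
  moreover from this have "k \<in> branch l" using ab by (auto simp: branch_def)
  ultimately show ?thesis by blast
qed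

lemma
  assumes "l \<in> {1..L}"
  shows real_momentum_in_branch: "real_momentum L U l \<Lambda> \<in> branch l"
    and lambda_of_real_momentum: "lambda_of (real_momentum L U l \<Lambda>) = \<Lambda>"
proof -
  have eq: "((real l - 1) * (2 * pi / real L) < k \<and> k < real l * (2 * pi / real L) \<and>
      sin k - \<Lambda> = U / 4 * cot (k * real L / 2)) \<longleftrightarrow> k \<in> branch l \<and> lambda_of k = \<Lambda>" for k
    by (auto simp: branch_def lambda_of_def)
  have "\<exists>!k. k \<in> branch l \<and> lambda_of k = \<Lambda>"
    using lambda_of_surj_on_branch[OF assms] inj_onD[OF lambda_of_inj_on] by metis
  then have "real_momentum L U l \<Lambda> \<in> branch l \<and> lambda_of (real_momentum L U l \<Lambda>) = \<Lambda>"
    unfolding real_momentum_def eq by (rule theI')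
  then show "real_momentum L U l \<Lambda> \<in> branch l" "lambda_of (real_momentum L U l \<Lambda>) = \<Lambda>"
    by blast+
qed

lemma real_momentum_lambda_of:
  assumes "l \<in> {1..L}" "k \<in> branch l"
  shows "real_momentum L U l (lambda_of k) = k"
  by (rule inj_onD[OF lambda_of_inj_on[of l]])
    (simp_all add: assms(2) real_momentum_in_branch[OF assms(1)] lambda_of_real_momentum[OF assms(1)])

lemma real_momentum_strict_mono:
  assumes "l \<in> {1..L}"
  shows "strict_mono (real_momentum L U l)"
proof (rule strict_monoI)
  fix \<Lambda> \<Lambda>' :: real assume "\<Lambda> < \<Lambda>'"
  then show "real_momentum L U l \<Lambda> < real_momentum L U l \<Lambda>'"
    using strict_mono_on_less[OF lambda_of_strict_mono_on] assms
      real_momentum_in_branch lambda_of_real_momentum by metis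
qed

lemma real_momentum_isCont:
  assumes "l \<in> {1..L}"
  shows "isCont (real_momentum L U l) \<Lambda>"
proof -
  let ?k = "real_momentum L U l \<Lambda>"
  obtain a b where ab: "a < ?k" "?k < b" "{a..b} \<subseteq> branch l"
  proof -
    define c where "c = (real l - 1) * (2 * pi / real L)"
    define d where "d = real l * (2 * pi / real L)"
    have "branch l = {c<..<d}" by (simp add: branch_def c_def d_def)
    with real_momentum_in_branch[OF assms, of \<Lambda>] show ?thesis
      by (intro that[of "(c + ?k) / 2" "(?k + d) / 2"]) auto
  qed
  have in_branch: "z \<in> branch l" if "a \<le> z" "z \<le> b" for z
    using ab(3) that by auto
  have "isCont (real_momentum L U l) (lambda_of ?k)"
    by (rule isCont_inverse_function2[OF ab(1,2)])
      (simp_all add: in_branch real_momentum_lambda_of[OF assms] lambda_of_isCont[of _ l])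
  then show ?thesis by (simp add: lambda_of_real_momentum[OF assms])
qed

lemma real_momentum_at_bot:
  assumes "l \<in> {1..L}"
  shows "(real_momentum L U l \<longlongrightarrow> (real l - 1) * (2 * pi / real L)) at_bot"
proof (rule order_tendstoI)
  let ?a = "(real l - 1) * (2 * pi / real L)" and ?b = "real l * (2 * pi / real L)"
  fix y assume "y < ?a"
  then have "y < real_momentum L U l \<Lambda>" for \<Lambda>
    using real_momentum_in_branch[OF assms, of \<Lambda>] by (auto simp: branch_def)
  then show "\<forall>\<^sub>F \<Lambda> in at_bot. y < real_momentum L U l \<Lambda>" by simp
next
  let ?a = "(real l - 1) * (2 * pi / real L)" and ?b = "real l * (2 * pi / real L)"
  fix y assume "?a < y"
  have "\<exists>p\<in>{a<..<b}. p < y" if "a < b" "a < y" for a b :: real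
    using that by (intro bexI[of _ "(a + min y b) / 2"]) auto
  then obtain p where p: "p \<in> branch l" "p < y"
    unfolding branch_def using \<open>?a < y\<close> branch_left_lt_right by blast
  show "\<forall>\<^sub>F \<Lambda> in at_bot. real_momentum L U l \<Lambda> < y"
    using eventually_gt_at_bot[of "lambda_of p"]
  proof eventually_elim
    case (elim \<Lambda>)
    then have "real_momentum L U l \<Lambda> < real_momentum L U l (lambda_of p)"
      using real_momentum_strict_mono[OF assms] by (simp add: strict_mono_less)
    then show ?case using real_momentum_lambda_of[OF assms p(1)] p(2) by simp
  qed
qed

lemma real_momentum_at_top:
  assumes "l \<in> {1..L}"
  shows "(real_momentum L U l \<longlongrightarrow> real l * (2 * pi / real L)) at_top"
proof (rule order_tendstoI)
  let ?a = "(real l - 1) * (2 * pi / real L)" and ?b = "real l * (2 * pi / real L)"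
  fix y assume "?b < y"
  then have "real_momentum L U l \<Lambda> < y" for \<Lambda>
    using real_momentum_in_branch[OF assms, of \<Lambda>] by (auto simp: branch_def)
  then show "\<forall>\<^sub>F \<Lambda> in at_top. real_momentum L U l \<Lambda> < y" by simp
next
  let ?a = "(real l - 1) * (2 * pi / real L)" and ?b = "real l * (2 * pi / real L)"
  fix y assume "y < ?b"
  have "\<exists>p\<in>{a<..<b}. y < p" if "a < b" "y < b" for a b :: real
    using that by (intro bexI[of _ "(max y a + b) / 2"]) auto
  then obtain p where p: "p \<in> branch l" "y < p"
    unfolding branch_def using \<open>y < ?b\<close> branch_left_lt_right by blast
  show "\<forall>\<^sub>F \<Lambda> in at_top. y < real_momentum L U l \<Lambda>"
    using eventually_gt_at_top[of "lambda_of p"]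
  proof eventually_elim
    case (elim \<Lambda>)
    then have "real_momentum L U l (lambda_of p) < real_momentum L U l \<Lambda>"
      using real_momentum_strict_mono[OF assms] by (simp add: strict_mono_less)
    then show ?case using real_momentum_lambda_of[OF assms p(1)] p(2) by simp
  qed
qed

lemma real_momentum_bounds:
  assumes "l \<in> {1..L}"
  shows "0 < real_momentum L U l \<Lambda> \<and> real_momentum L U l \<Lambda> < 2 * pi"
proof -
  have "0 \<le> (real l - 1) * (2 * pi / real L)"
    using assms branch_width_pos by auto
  moreover have "real l * (2 * pi / real L) \<le> real L * (2 * pi / real L)"
    using assms branch_width_pos by (intro mult_right_mono) auto
  ultimately show ?thesis
    using real_momentum_in_branch[OF assms, of \<Lambda>] L_pos by (auto simp: branch_def)
qed

lemma real_momentum_inj: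
  assumes "l \<in> {1..L}" "m \<in> {1..L}" "real_momentum L U l \<Lambda> = real_momentum L U m \<Lambda>"
  shows "l = m"
  using real_momentum_in_branch[OF assms(1), of \<Lambda>] real_momentum_in_branch[OF assms(2), of \<Lambda>]
    assms(3) branch_disjoint by metis

section \<open>Roots of the Lieb--Wu polynomial\<close>

definition circle_roots :: "real \<Rightarrow> complex set" where
  "circle_roots \<Lambda> = (\<lambda>l. cis (real_momentum L U l \<Lambda>)) ` {1..L}"

lemma finite_circle_roots: "finite (circle_roots \<Lambda>)"
  unfolding circle_roots_def by simp

lemma norm_circle_roots: "x \<in> circle_roots \<Lambda> \<Longrightarrow> cmod x = 1"
  unfolding circle_roots_def by auto

lemma inj_on_cis_real_momentum: "inj_on (\<lambda>l. cis (real_momentum L U l \<Lambda>)) {1..L}"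
proof (rule inj_onI)
  fix l m assume lm: "l \<in> {1..L}" "m \<in> {1..L}"
    "cis (real_momentum L U l \<Lambda>) = cis (real_momentum L U m \<Lambda>)"
  then have "real_momentum L U l \<Lambda> = real_momentum L U m \<Lambda>"
    using real_momentum_bounds[OF lm(1), of \<Lambda>] real_momentum_bounds[OF lm(2), of \<Lambda>]
    by (intro inj_onD[OF cis_inj_on_0_2pi]) auto
  then show "l = m" using real_momentum_inj lm by blast
qed

lemma card_circle_roots: "card (circle_roots \<Lambda>) = L"
  unfolding circle_roots_def using card_image[OF inj_on_cis_real_momentum] by simp

lemma prod_circle_roots: "(\<Prod>x\<in>circle_roots \<Lambda>. x) = cis (\<Sum>l\<in>{1..L}. real_momentum L U l \<Lambda>)"
proof -
  have "(\<Prod>x\<in>circle_roots \<Lambda>. x) = (\<Prod>l\<in>{1..L}. cis (real_momentum L U l \<Lambda>))"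
    unfolding circle_roots_def by (rule prod.reindex[OF inj_on_cis_real_momentum, unfolded comp_def])
  also have "\<dots> = cis (\<Sum>l\<in>{1..L}. real_momentum L U l \<Lambda>)"
    by (induction rule: infinite_finite_induct) (auto simp: cis_mult)
  finally show ?thesis .
qed

lemma lw_poly_real_momentum_root:
  assumes "l \<in> {1..L}"
  shows "poly (lwp \<Lambda>) (cis (real_momentum L U l \<Lambda>)) = 0"
proof -
  let ?k = "real_momentum L U l \<Lambda>"
  have "\<Lambda> - sin ?k + U / 4 * cot (?k * real L / 2) = 0"
    using lambda_of_real_momentum[OF assms, of \<Lambda>] unfolding lambda_of_def by simp
  then show ?thesis
    unfolding poly_lw_poly_cis[OF sin_half_angle_nonzero[OF real_momentum_in_branch[OF assms]]] by simp
qed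

lemma lw_poly_circle_roots: "x \<in> circle_roots \<Lambda> \<Longrightarrow> poly (lwp \<Lambda>) x = 0"
  unfolding circle_roots_def using lw_poly_real_momentum_root by auto

lemma unimodular_root_in_circle_roots:
  assumes "cmod y = 1" "poly (lwp \<Lambda>) y = 0"
  shows "y \<in> circle_roots \<Lambda>"
proof -
  define k where "k = Arg2pi y"
  have k: "0 \<le> k" "k < 2 * pi" "y = cis k"
    using Arg2pi_ge_0 Arg2pi_lt_2pi unimodular_eq_cis_Arg2pi[OF assms(1)] by (auto simp: k_def)
  have "sin (k * real L / 2) \<noteq> 0"
  proof
    assume "sin (k * real L / 2) = 0"
    then obtain i :: int where "k * real L / 2 = of_int i * pi"
      by (auto simp: sin_zero_iff_int2)
    then have "real L * k = 2 * pi * of_int i" by (simp add: field_simps)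
    then have "y ^ L = 1"
      unfolding k(3) Complex.DeMoivre by simp
    then have "poly (lwp \<Lambda>) y = U * y"
      unfolding poly_lw_poly by simp
    then show False using assms U_pos by auto
  qed
  then obtain l where l: "l \<in> {1..L}" "k \<in> branch l"
    using branch_of_angle k(1,2) by blast
  have "cis (k * real L) - 1 \<noteq> 0"
    using cis_double_minus_1[of "k * real L / 2"] \<open>sin (k * real L / 2) \<noteq> 0\<close> by simp
  then have "complex_of_real (\<Lambda> - sin k + U / 4 * cot (k * real L / 2)) = 0"
    using assms(2) poly_lw_poly_cis[OF \<open>sin (k * real L / 2) \<noteq> 0\<close>, of "U / 4" \<Lambda>] k(3)
    by (simp only: mult_eq_0_iff) simp
  then have "\<Lambda> - sin k + U / 4 * cot (k * real L / 2) = 0"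
    by (simp only: of_real_eq_0_iff)
  then have "lambda_of k = \<Lambda>" unfolding lambda_of_def by simp
  then have "real_momentum L U l \<Lambda> = k" using real_momentum_lambda_of[OF l] by simp
  then show ?thesis unfolding circle_roots_def k(3) using l(1) by force
qed

lemma lw_poly_pderiv_circle_roots_nonzero:
  assumes "x \<in> circle_roots \<Lambda>"
  shows "poly (pderiv (lwp \<Lambda>)) x \<noteq> 0"
proof
  obtain l where l: "l \<in> {1..L}" and x: "x = cis (real_momentum L U l \<Lambda>)"
    using assms unfolding circle_roots_def by auto
  define k where "k = real_momentum L U l \<Lambda>"
  define t where "t = k * real L / 2"
  have xL: "x ^ L = cis (2 * t)"
    unfolding x k_def[symmetric] t_def Complex.DeMoivre by (simp add: field_simps)
  have x2: "x\<^sup>2 + 1 = 2 * of_real (cos k) * x"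
    using cis_double_plus_1[of k] by (simp add: x k_def[symmetric] Complex.DeMoivre)
  assume "poly (pderiv (lwp \<Lambda>)) x = 0"
  then have "(x ^ L - 1)\<^sup>2 * (x\<^sup>2 + 1) - 4 * of_real (U / 4) * of_nat L * x ^ L * x = 0"
    using lw_poly_pderiv_identity[OF L_pos, of x "U / 4" \<Lambda>] lw_poly_circle_roots[OF assms] by simp
  also have "(x ^ L - 1)\<^sup>2 * (x\<^sup>2 + 1) - 4 * of_real (U / 4) * of_nat L * x ^ L * x =
      -4 * cis (2 * t) * x * of_real (2 * (sin t)\<^sup>2 * cos k + U / 4 * real L)"
    unfolding xL x2 cis_double_minus_1_sq by (simp add: algebra_simps)
  finally have "complex_of_real (2 * (sin t)\<^sup>2 * cos k + U / 4 * real L) = 0"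
    by (simp only: mult_eq_0_iff) (simp add: x)
  then have "2 * (sin t)\<^sup>2 * cos k + U / 4 * real L = 0"
    by (simp only: of_real_eq_0_iff)
  moreover have "\<bar>(sin t)\<^sup>2 * cos k\<bar> \<le> 1"
    by (simp add: abs_mult abs_square_le_1 mult_le_one)
  ultimately show False using UL_gt_8 by linarith
qed

lemma lw_poly_splits:
  "\<exists>r1 r2. lwp \<Lambda> = (\<Prod>x\<in>circle_roots \<Lambda>. [:-x, 1:]) * ([:-r1, 1:] * [:-r2, 1:])"
proof -
  define R where "R = (\<Prod>x\<in>circle_roots \<Lambda>. [:-x, 1:])"
  have "R dvd lwp \<Lambda>"
    unfolding R_def by (rule prod_linear_factors_dvd) (auto simp: finite_circle_roots lw_poly_circle_roots)
  then obtain Q where PQ: "lwp \<Lambda> = R * Q" by (elim dvdE)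
  have "lwp \<Lambda> \<noteq> 0"
    using lead_coeff_lw_poly[OF L_pos, of "U / 4" \<Lambda>] by auto
  then have R0: "R \<noteq> 0" and Q0: "Q \<noteq> 0"
    using PQ by auto
  have "degree R = L"
    unfolding R_def by (simp add: degree_prod_sum_eq card_circle_roots)
  moreover have "lead_coeff R = 1"
    unfolding R_def by (simp add: lead_coeff_prod)
  ultimately have degQ: "degree Q = 2" and leadQ: "lead_coeff Q = 1"
    using degree_mult_eq[OF R0 Q0] lead_coeff_mult[of R Q] PQ[symmetric]
      degree_lw_poly[OF L_pos, of "U / 4" \<Lambda>] lead_coeff_lw_poly[OF L_pos, of "U / 4" \<Lambda>]
    by simp_all
  obtain r where "smult (lead_coeff Q) (\<Prod>i<degree Q. [:-r i, 1:]) = Q"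
    by (rule complex_poly_decompose')
  then have "Q = [:-r 0, 1:] * [:-r 1, 1:]"
    using degQ leadQ by (simp add: numeral_2_eq_2 lessThan_Suc algebra_simps)
  then show ?thesis using PQ unfolding R_def by blast
qed

lemma lw_poly_extra_root_off_circle:
  assumes "lwp \<Lambda> = (\<Prod>x\<in>circle_roots \<Lambda>. [:-x, 1:]) * ([:-r, 1:] * [:-r', 1:])"
  shows "cmod r \<noteq> 1"
proof
  assume "cmod r = 1"
  moreover have "poly (lwp \<Lambda>) r = 0"
    unfolding assms poly_linear_factors_eq_0_iff[OF finite_circle_roots] by simp
  ultimately have r: "r \<in> circle_roots \<Lambda>" by (rule unimodular_root_in_circle_roots)
  then have "[:-r, 1:] ^ 2 dvd lwp \<Lambda>"
    unfolding assms prod.remove[OF finite_circle_roots r] power2_eq_square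
    by (intro mult_dvd_mono dvd_triv_left)
  then have "poly (pderiv (lwp \<Lambda>)) r = 0"
    by (rule poly_pderiv_at_double_root)
  then show False using lw_poly_pderiv_circle_roots_nonzero[OF r] by simp
qed

text \<open>Neither extra root lies on the unit circle, so the reflection \<open>w \<mapsto> 1/w\<^sup>*\<close> of the root
  set, which fixes exactly the unimodular points, has to exchange them.\<close>

lemma lw_poly_factorization:
  obtains z where "1 < cmod z"
    and "lwp \<Lambda> = (\<Prod>x\<in>circle_roots \<Lambda>. [:-x, 1:]) * ([:-z, 1:] * [:-inverse (cnj z), 1:])"
proof -
  obtain r1 r2 where split: "lwp \<Lambda> = (\<Prod>x\<in>circle_roots \<Lambda>. [:-x, 1:]) * ([:-r1, 1:] * [:-r2, 1:])"
    using lw_poly_splits by blast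
  then have split': "lwp \<Lambda> = (\<Prod>x\<in>circle_roots \<Lambda>. [:-x, 1:]) * ([:-r2, 1:] * [:-r1, 1:])"
    by (simp add: mult.commute)
  have roots: "poly (lwp \<Lambda>) y = 0 \<longleftrightarrow> y \<in> circle_roots \<Lambda> \<or> y = r1 \<or> y = r2" for y
    unfolding split by (rule poly_linear_factors_eq_0_iff[OF finite_circle_roots])
  have off: "cmod r1 \<noteq> 1" "cmod r2 \<noteq> 1"
    using lw_poly_extra_root_off_circle[OF split] lw_poly_extra_root_off_circle[OF split'] .
  have "r1 \<noteq> 0" using roots[of 0] poly_lw_poly_0[OF L_pos] by auto
  then have "poly (lwp \<Lambda>) (inverse (cnj r1)) = 0"
    using roots by (intro lw_poly_root_reflect) auto
  moreover have "cmod (inverse (cnj r1)) \<noteq> 1"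
    using off(1) by (simp add: norm_inverse)
  moreover have "inverse (cnj r1) \<noteq> r1"
  proof
    assume "inverse (cnj r1) = r1"
    then have "cmod r1 * cmod r1 = 1"
      using \<open>r1 \<noteq> 0\<close> by (metis complex_mod_cnj norm_inverse right_inverse norm_eq_zero)
    then show False using off(1) by (metis abs_of_nonneg norm_ge_zero real_sqrt_abs2 real_sqrt_one)
  qed
  ultimately have r2: "r2 = inverse (cnj r1)"
    using roots norm_circle_roots by blast
  show ?thesis
  proof (cases "1 < cmod r1")
    case True
    then show ?thesis using that split unfolding r2 by blast
  next
    case False
    then have "1 < cmod r2"
      using off(1) \<open>r1 \<noteq> 0\<close> by (simp add: r2 norm_inverse one_less_inverse)
    moreover have "r1 = inverse (cnj r2)" by (simp add: r2)
    ultimately show ?thesis using that split' by blast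
  qed
qed

lemma lw_poly_root_outside_disc_iff:
  assumes "1 < cmod z"
    and "lwp \<Lambda> = (\<Prod>x\<in>circle_roots \<Lambda>. [:-x, 1:]) * ([:-z, 1:] * [:-inverse (cnj z), 1:])"
  shows "1 < cmod y \<and> poly (lwp \<Lambda>) y = 0 \<longleftrightarrow> y = z"
proof -
  have "cmod (inverse (cnj z)) < 1"
    using assms(1) by (simp add: norm_inverse inverse_less_1_iff)
  then show ?thesis
    unfolding assms(2) poly_linear_factors_eq_0_iff[OF finite_circle_roots]
    using assms(1) norm_circle_roots by auto
qed

definition outer_root :: "real \<Rightarrow> complex" where
  "outer_root \<Lambda> = (THE z. 1 < cmod z \<and> poly (lwp \<Lambda>) z = 0)"

lemma
  shows outer_root_gt_1: "1 < cmod (outer_root \<Lambda>)"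
    and lw_poly_outer_factorization: "lwp \<Lambda> = (\<Prod>x\<in>circle_roots \<Lambda>. [:-x, 1:]) *
      ([:-outer_root \<Lambda>, 1:] * [:-inverse (cnj (outer_root \<Lambda>)), 1:])"
proof -
  obtain z where z: "1 < cmod z"
    "lwp \<Lambda> = (\<Prod>x\<in>circle_roots \<Lambda>. [:-x, 1:]) * ([:-z, 1:] * [:-inverse (cnj z), 1:])"
    by (rule lw_poly_factorization)
  have "outer_root \<Lambda> = z"
    unfolding outer_root_def using lw_poly_root_outside_disc_iff[OF z] by blast
  then show "1 < cmod (outer_root \<Lambda>)" "lwp \<Lambda> = (\<Prod>x\<in>circle_roots \<Lambda>. [:-x, 1:]) *
      ([:-outer_root \<Lambda>, 1:] * [:-inverse (cnj (outer_root \<Lambda>)), 1:])"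
    using z by simp_all
qed

lemma outer_root_unique: "1 < cmod y \<Longrightarrow> poly (lwp \<Lambda>) y = 0 \<Longrightarrow> y = outer_root \<Lambda>"
  using lw_poly_root_outside_disc_iff[OF outer_root_gt_1 lw_poly_outer_factorization] by blast

lemma outer_root_roots:
  "poly (lwp \<Lambda>) (outer_root \<Lambda>) = 0" "poly (lwp \<Lambda>) (inverse (cnj (outer_root \<Lambda>))) = 0"
  by (subst lw_poly_outer_factorization, simp only: poly_linear_factors_eq_0_iff[OF finite_circle_roots], simp)+

section \<open>Counting the solutions\<close>

definition string_q :: "real \<Rightarrow> real" where
  "string_q \<Lambda> = Arg2pi (outer_root \<Lambda>)"

definition string_xi :: "real \<Rightarrow> real" where
  "string_xi \<Lambda> = ln (cmod (outer_root \<Lambda>))"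

lemma string_q_bounds: "0 \<le> string_q \<Lambda> \<and> string_q \<Lambda> < 2 * pi"
  by (simp add: string_q_def Arg2pi_ge_0 Arg2pi_lt_2pi)

lemma string_xi_pos: "0 < string_xi \<Lambda>"
  unfolding string_xi_def by (rule ln_gt_zero[OF outer_root_gt_1])

lemma outer_root_polar: "outer_root \<Lambda> = of_real (exp (string_xi \<Lambda>)) * cis (string_q \<Lambda>)"
proof -
  have "outer_root \<Lambda> \<noteq> 0"
    using outer_root_gt_1[of \<Lambda>] by (metis norm_zero not_one_less_zero)
  then have "exp (string_xi \<Lambda>) = cmod (outer_root \<Lambda>)"
    unfolding string_xi_def by simp
  then show ?thesis
    unfolding string_q_def cis_conv_exp using Arg2pi_eq by simp
qed

lemma outer_root_polar_unique:
  assumes "0 \<le> q" "q < 2 * pi" "of_real (exp \<xi>) * cis q = outer_root \<Lambda>"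
  shows "q = string_q \<Lambda>" "\<xi> = string_xi \<Lambda>"
proof -
  show "q = string_q \<Lambda>"
    unfolding string_q_def using Arg2pi_unique[of "exp \<xi>" q "outer_root \<Lambda>"] assms
    by (simp add: cis_conv_exp)
  have "cmod (outer_root \<Lambda>) = exp \<xi>"
    unfolding assms(3)[symmetric] by (simp add: norm_mult)
  then show "\<xi> = string_xi \<Lambda>"
    unfolding string_xi_def by simp
qed

lemma reflected_outer_root_polar:
  "inverse (cnj (outer_root \<Lambda>)) = of_real (exp (- string_xi \<Lambda>)) * cis (string_q \<Lambda>)"
  unfolding outer_root_polar by (simp add: cis_cnj exp_minus)

text \<open>Comparing constant terms in the factorization: \<open>P(0) = 1\<close> is \<open>(-1)\<^sup>L\<close> times the
  product of all roots.\<close>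

lemma outer_root_product_relation:
  "cis (2 * string_q \<Lambda>) * (-1) ^ L * cis (\<Sum>l\<in>{1..L}. real_momentum L U l \<Lambda>) = 1"
proof -
  have "1 = poly (lwp \<Lambda>) 0"
    using poly_lw_poly_0[OF L_pos] by simp
  also have "\<dots> = (\<Prod>x\<in>circle_roots \<Lambda>. - x) * (outer_root \<Lambda> * inverse (cnj (outer_root \<Lambda>)))"
    by (subst lw_poly_outer_factorization) (simp only: poly_mult poly_prod, simp)
  also have "(\<Prod>x\<in>circle_roots \<Lambda>. - x) = (-1) ^ L * cis (\<Sum>l\<in>{1..L}. real_momentum L U l \<Lambda>)"
    by (simp add: prod_uminus card_circle_roots prod_circle_roots)
  also have "outer_root \<Lambda> * inverse (cnj (outer_root \<Lambda>)) = cis (2 * string_q \<Lambda>)"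
    unfolding reflected_outer_root_polar by (subst outer_root_polar) (simp add: cis_mult exp_minus field_simps)
  finally show ?thesis by (simp add: mult_ac)
qed

lemma string_solutions_on_branch:
  assumes l: "l \<in> {1..L}"
  shows "{(q, \<xi>, k3, \<Lambda>) \<in> string_solutions L U. k3 = real_momentum L U l \<Lambda>} =
    (\<lambda>\<Lambda>. (string_q \<Lambda>, string_xi \<Lambda>, real_momentum L U l \<Lambda>, \<Lambda>)) `
      {\<Lambda>. cis ((2 * string_q \<Lambda> + real_momentum L U l \<Lambda>) * real L) = 1}"
proof (intro set_eqI iffI)
  fix s assume "s \<in> {(q, \<xi>, k3, \<Lambda>) \<in> string_solutions L U. k3 = real_momentum L U l \<Lambda>}"
  then obtain q \<xi> \<Lambda> where s: "s = (q, \<xi>, real_momentum L U l \<Lambda>, \<Lambda>)"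
    and sol: "(q, \<xi>, real_momentum L U l \<Lambda>, \<Lambda>) \<in> string_solutions L U" by auto
  note S = sol[unfolded string_solutions_iff[OF U_neq_0]]
  have "1 < cmod (of_real (exp \<xi>) * cis q)" using S by (simp add: norm_mult)
  then have "of_real (exp \<xi>) * cis q = outer_root \<Lambda>"
    using S by (intro outer_root_unique) auto
  then have "q = string_q \<Lambda>" "\<xi> = string_xi \<Lambda>"
    using outer_root_polar_unique S by auto
  then show "s \<in> (\<lambda>\<Lambda>. (string_q \<Lambda>, string_xi \<Lambda>, real_momentum L U l \<Lambda>, \<Lambda>)) `
      {\<Lambda>. cis ((2 * string_q \<Lambda> + real_momentum L U l \<Lambda>) * real L) = 1}"
    using S unfolding s by auto
next
  fix s assume "s \<in> (\<lambda>\<Lambda>. (string_q \<Lambda>, string_xi \<Lambda>, real_momentum L U l \<Lambda>, \<Lambda>)) `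
      {\<Lambda>. cis ((2 * string_q \<Lambda> + real_momentum L U l \<Lambda>) * real L) = 1}"
  then obtain \<Lambda> where s: "s = (string_q \<Lambda>, string_xi \<Lambda>, real_momentum L U l \<Lambda>, \<Lambda>)"
    and c: "cis ((2 * string_q \<Lambda> + real_momentum L U l \<Lambda>) * real L) = 1" by auto
  have "(string_q \<Lambda>, string_xi \<Lambda>, real_momentum L U l \<Lambda>, \<Lambda>) \<in> string_solutions L U"
    unfolding string_solutions_iff[OF U_neq_0]
    using string_q_bounds[of \<Lambda>] string_xi_pos[of \<Lambda>] real_momentum_bounds[OF l, of \<Lambda>] c
      outer_root_roots[of \<Lambda>] lw_poly_real_momentum_root[OF l, of \<Lambda>]
    by (simp add: outer_root_polar[symmetric] reflected_outer_root_polar[symmetric])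
  then show "s \<in> {(q, \<xi>, k3, \<Lambda>) \<in> string_solutions L U. k3 = real_momentum L U l \<Lambda>}"
    unfolding s by simp
qed

definition string_phase :: "nat \<Rightarrow> real \<Rightarrow> real" where
  "string_phase l \<Lambda> = real L / (2 * pi) * (\<Sum>m\<in>{1..L} - {l}. real_momentum L U m \<Lambda>) - real L / 2"

lemma product_equation_iff_string_phase:
  assumes l: "l \<in> {1..L}"
  shows "cis ((2 * string_q \<Lambda> + real_momentum L U l \<Lambda>) * real L) = 1 \<longleftrightarrow> string_phase l \<Lambda> \<in> \<int>"
proof -
  let ?r = "real_momentum L U l \<Lambda>" and ?S = "\<Sum>m\<in>{1..L} - {l}. real_momentum L U m \<Lambda>"
  define A where "A = (2 * string_q \<Lambda> + ?r) / (2 * pi)"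
  define B where "B = (real L * pi + ?S) / (2 * pi)"
  have "cis (2 * string_q \<Lambda>) * cis (real L * pi) * cis (?r + ?S) = 1"
    using outer_root_product_relation[of \<Lambda>]
      sum.remove[OF finite_atLeastAtMost l, of "\<lambda>m. real_momentum L U m \<Lambda>"]
    by (simp add: Complex.DeMoivre[symmetric])
  moreover have "2 * pi * (A + B) = 2 * string_q \<Lambda> + real L * pi + (?r + ?S)"
    unfolding A_def B_def by (simp add: field_simps)
  ultimately have "cis (2 * pi * (A + B)) = 1"
    by (simp only: cis_mult)
  then have "real L * (A + B) \<in> \<int>"
    unfolding cis_eq_1_iff_Ints by simp
  moreover have "real L * A = real L * (A + B) - real L * B"
    by (simp add: algebra_simps)
  ultimately have "real L * A \<in> \<int> \<longleftrightarrow> real L * B \<in> \<int>"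
    by simp
  moreover have "(2 * string_q \<Lambda> + ?r) * real L / (2 * pi) = real L * A"
    by (simp add: A_def)
  moreover have "even (L * (L + 1))"
    by simp
  then have "real L * B = string_phase l \<Lambda> + real (L * (L + 1) div 2)"
    by (simp add: B_def string_phase_def real_of_nat_div field_simps)
  ultimately show ?thesis
    by (simp add: cis_eq_1_iff_Ints)
qed

lemma string_phase_strict_mono:
  assumes "2 \<le> L"
  shows "strict_mono (string_phase l)"
proof (rule strict_monoI)
  fix x y :: real assume "x < y"
  have "1 \<in> {1..L} - {l} \<or> 2 \<in> {1..L} - {l}" using assms by auto
  then have "{1..L} - {l} \<noteq> {}" by blast
  then have "(\<Sum>m\<in>{1..L} - {l}. real_momentum L U m x) < (\<Sum>m\<in>{1..L} - {l}. real_momentum L U m y)"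
    using real_momentum_strict_mono \<open>x < y\<close> by (intro sum_strict_mono) (auto simp: strict_mono_less)
  then show "string_phase l x < string_phase l y"
    unfolding string_phase_def using L_pos by (intro diff_strict_right_mono mult_strict_left_mono) simp_all
qed

lemma string_phase_isCont: "isCont (string_phase l) \<Lambda>"
  unfolding string_phase_def[abs_def] by (intro continuous_intros real_momentum_isCont) auto

lemma string_phase_at_bot:
  "(string_phase l \<longlongrightarrow> (\<Sum>m\<in>{1..L} - {l}. real m - 1) - real L / 2) at_bot"
proof -
  have "(string_phase l \<longlongrightarrow>
      real L / (2 * pi) * (\<Sum>m\<in>{1..L} - {l}. (real m - 1) * (2 * pi / real L)) - real L / 2) at_bot"
    unfolding string_phase_def[abs_def] by (intro tendsto_intros real_momentum_at_bot) auto
  also have "real L / (2 * pi) * (\<Sum>m\<in>{1..L} - {l}. (real m - 1) * (2 * pi / real L))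
      = (\<Sum>m\<in>{1..L} - {l}. real m - 1)"
    unfolding sum_distrib_left using L_pos by (intro sum.cong) auto
  finally show ?thesis .
qed

lemma string_phase_at_top:
  assumes "l \<in> {1..L}"
  shows "(string_phase l \<longlongrightarrow> (\<Sum>m\<in>{1..L} - {l}. real m - 1) + real L / 2 - 1) at_top"
proof -
  have "(string_phase l \<longlongrightarrow>
      real L / (2 * pi) * (\<Sum>m\<in>{1..L} - {l}. real m * (2 * pi / real L)) - real L / 2) at_top"
    unfolding string_phase_def[abs_def] by (intro tendsto_intros real_momentum_at_top) auto
  also have "real L / (2 * pi) * (\<Sum>m\<in>{1..L} - {l}. real m * (2 * pi / real L))
      = (\<Sum>m\<in>{1..L} - {l}. real m)"
    unfolding sum_distrib_left using L_pos by (intro sum.cong) auto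
  also have "\<dots> = (\<Sum>m\<in>{1..L} - {l}. real m - 1) + (real L - 1)"
    using assms L_pos by (simp add: sum_subtractf card_Diff_singleton of_nat_diff)
  finally show ?thesis by (simp add: algebra_simps)
qed

lemma card_string_phase_Ints:
  assumes l: "l \<in> {1..L}"
  shows "finite {\<Lambda>. string_phase l \<Lambda> \<in> \<int>} \<and>
    card {\<Lambda>. string_phase l \<Lambda> \<in> \<int>} = (if odd L then L - 1 else L - 2)"
proof (cases "L = 1")
  case True
  have "(- 1 / 2 :: real) \<notin> \<int>"
  proof
    assume "(- 1 / 2 :: real) \<in> \<int>"
    then obtain n :: int where "- 1 / 2 = real_of_int n" by (auto elim: Ints_cases)
    then have "real_of_int (2 * n) = - 1" by simp
    then have "2 * n = - 1" by linarith
    then show False by presburger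
  qed
  moreover have "string_phase l \<Lambda> = - 1 / 2" for \<Lambda>
    unfolding string_phase_def using True l by simp
  ultimately show ?thesis using True by simp
next
  case False
  define A where "A = (\<Sum>m\<in>{1..L} - {l}. int m - 1)"
  have A: "(\<Sum>m\<in>{1..L} - {l}. real m - 1) = of_int A"
    unfolding A_def by simp
  show ?thesis
    using card_Ints_preimage_strict_mono[OF string_phase_strict_mono string_phase_isCont
        string_phase_at_bot string_phase_at_top[OF l]] card_int_open_interval[of L A] False L_pos
    unfolding A by simp
qed

lemma card_string_solutions_on_branch:
  assumes l: "l \<in> {1..L}"
  shows "finite {(q, \<xi>, k3, \<Lambda>) \<in> string_solutions L U. k3 = real_momentum L U l \<Lambda>} \<and>
    card {(q, \<xi>, k3, \<Lambda>) \<in> string_solutions L U. k3 = real_momentum L U l \<Lambda>}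
      = (if odd L then L - 1 else L - 2)"
proof -
  have "inj (\<lambda>\<Lambda>. (string_q \<Lambda>, string_xi \<Lambda>, real_momentum L U l \<Lambda>, \<Lambda>))"
    by (rule injI) simp
  then show ?thesis
    unfolding string_solutions_on_branch[OF l] product_equation_iff_string_phase[OF l]
    using card_string_phase_Ints[OF l] by (simp add: card_image inj_on_subset[of _ UNIV])
qed

lemma string_solutions_eq_Union_branches:
  "string_solutions L U =
    (\<Union>l\<in>{1..L}. {(q, \<xi>, k3, \<Lambda>) \<in> string_solutions L U. k3 = real_momentum L U l \<Lambda>})"
proof (intro set_eqI iffI)
  fix s assume "s \<in> string_solutions L U"
  moreover obtain q \<xi> k3 \<Lambda> where s: "s = (q, \<xi>, k3, \<Lambda>)" by (cases s) auto
  ultimately have sol: "(q, \<xi>, k3, \<Lambda>) \<in> string_solutions L U" by simp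
  note S = sol[unfolded string_solutions_iff[OF U_neq_0]]
  have "cis k3 \<in> circle_roots \<Lambda>" using S by (intro unimodular_root_in_circle_roots) auto
  then obtain l where l: "l \<in> {1..L}" "cis k3 = cis (real_momentum L U l \<Lambda>)"
    unfolding circle_roots_def by auto
  then have "k3 = real_momentum L U l \<Lambda>"
    using S real_momentum_bounds[OF l(1), of \<Lambda>] by (intro inj_onD[OF cis_inj_on_0_2pi]) auto
  then show "s \<in> (\<Union>l\<in>{1..L}. {(q, \<xi>, k3, \<Lambda>) \<in> string_solutions L U. k3 = real_momentum L U l \<Lambda>})"
    using sol l(1) unfolding s by auto
qed auto

lemma card_string_solutions:
  "finite (string_solutions L U) \<and>
    card (string_solutions L U) = (if odd L then L * (L - 1) else L * (L - 2))"
proof -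
  let ?S = "\<lambda>l. {(q, \<xi>, k3, \<Lambda>) \<in> string_solutions L U. k3 = real_momentum L U l \<Lambda>}"
  have disjoint: "?S l \<inter> ?S m = {}" if "l \<in> {1..L}" "m \<in> {1..L}" "l \<noteq> m" for l m
    using real_momentum_inj[OF that(1,2)] that(3) by auto
  have "card (\<Union>l\<in>{1..L}. ?S l) = (\<Sum>l\<in>{1..L}. card (?S l))"
    using card_string_solutions_on_branch disjoint by (intro card_UN_disjoint) auto
  also have "\<dots> = (if odd L then L * (L - 1) else L * (L - 2))"
    using card_string_solutions_on_branch by simp
  moreover have "finite (\<Union>l\<in>{1..L}. ?S l)"
    using card_string_solutions_on_branch by (intro finite_UN_I) auto
  ultimately show ?thesis
    by (simp only: string_solutions_eq_Union_branches[symmetric])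
qed

end

theorem mainTheorem5:
  fixes L :: nat and U :: real
  assumes "0 < L" and "0 < U" and "real L > 8 / U"
  shows "(\<forall>(q, \<xi>, k3, \<Lambda>) \<in> string_solutions L U. pi / 2 < q \<and> q < 3 * pi / 2)
    \<and> (\<forall>l \<in> {1..L}.
          finite {(q, \<xi>, k3, \<Lambda>) \<in> string_solutions L U. k3 = real_momentum L U l \<Lambda>} \<and>
          card {(q, \<xi>, k3, \<Lambda>) \<in> string_solutions L U. k3 = real_momentum L U l \<Lambda>}
            = (if odd L then L - 1 else L - 2))
    \<and> finite (string_solutions L U)
    \<and> card (string_solutions L U) = (if odd L then L * (L - 1) else L * (L - 2))"
proof -
  have "8 < U * real L"
    using assms(2,3) by (simp add: pos_divide_less_eq mult.commute)
  then interpret lieb_wu_regime L U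
    using assms(1,2) by unfold_locales
  show ?thesis
    using string_solutions_q_range[OF assms(1,2)] card_string_solutions_on_branch card_string_solutions
    by auto
qed

end
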